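(* Let $k\ge2$ be an integer, $c\in(0,1)$, and let $(M_n)_{n\ge1}$ be integers with $1\le M_n\le kn-1$ and $M_n/(kn)\to c$. Then \[ \lim_{n\to\infty} P_{n,k}(\mathcal{S}(n,k;M_n))=k\sum_{l=1}^k\binom kl\Big(\frac c{1-c}\Big)^l\sum_{s=1}^\infty\frac{(1-c)^{k(s+1)}}{k(s+1)-l}+(1-c)^k\sum_{l=1}^{k-1}\binom kl\Big(\frac c{1-c}\Big)^l. \]
   Context: Fix integers $k\ge2$, $n\ge1$. There are $kn$ items, $k$ items at each of the ranks $1,2,\dots,n$ (rank $n$ is highest). The items are revealed one at a time in a uniformly random order, i.e. the sequence of ranks is a uniformly random permutation of the multiset $\{1^k,2^k,\dots,n^k\}$; $P_{n,k}$ denotes this uniform probability. For $M\in\{1,\dots,kn-1\}$, the strategy $\mathcal{S}(n,k;M)$ lets the first $M$ items pass and then selects the first later-arriving item whose rank is greater than or equal to the highest rank among the first $M$ items (if such an item exists; otherwise nothing is selected). $P_{n,k}(\mathcal{S}(n,k;M))$ denotes the probability that this strategy selects an item of rank $n$. *)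

theory Defs
  imports "HOL-Analysis.Analysis"
begin

text \<open>Rank sequences: uniformly random permutations of the multiset {1^k,...,n^k},
  represented as lists of length k*n in which every rank 1..n occurs exactly k times.\<close>
definition arrangements :: "nat \<Rightarrow> nat \<Rightarrow> nat list set" where
  "arrangements n k = {xs. length xs = k * n \<and> set xs \<subseteq> {1..n} \<and>
                          (\<forall>r\<in>{1..n}. count_list xs r = k)}"

definition strategy_succeeds :: "nat \<Rightarrow> nat \<Rightarrow> nat list \<Rightarrow> bool" where
  "strategy_succeeds n M xs =
     (case find (\<lambda>x. Max (set (take M xs)) \<le> x) (drop M xs) of
        None \<Rightarrow> False
      | Some x \<Rightarrow> x = n)"

definition success_prob :: "nat \<Rightarrow> nat \<Rightarrow> nat \<Rightarrow> real" where
  "success_prob n k M =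
     real (card {xs \<in> arrangements n k. strategy_succeeds n M xs}) / real (card (arrangements n k))"

end

theory Submission
  imports Defs "HOL-Combinatorics.Multiset_Permutations"
begin

text \<open>
  Split the success event according to the threshold \<open>t = n - s\<close>, the highest rank among
  the first \<open>M\<close> items, and the number \<open>l\<close> of its copies there.  As \<open>n \<rightarrow> \<infinity>\<close> the hypergeometric weights tend to \<open>c^l (1 - c)^(k (s + 1) - l)\<close>
  and the \<open>s\<close>-th term is dominated by \<open>2^k (1 - c/4)^(k s)\<close>, so Tannery's theorem moves the
  limit inside the sum; the term \<open>s = 0\<close> and the tail \<open>s \<ge> 1\<close> give the two summands of the
  limit.
\<close>

section \<open>Random permutations of a multiset\<close>

lemma real_card_permutations_of_multiset:
  assumes "finite S" "set_mset X \<subseteq> S"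
  shows "real (card (permutations_of_multiset X)) = fact (size X) / (\<Prod>x\<in>S. fact (count X x))"
proof -
  have "(\<Prod>x\<in>S. fact (count X x) :: nat) = (\<Prod>x\<in>set_mset X. fact (count X x))"
    using assms by (intro prod.mono_neutral_right) (auto simp: not_in_iff)
  hence "card (permutations_of_multiset X) * (\<Prod>x\<in>S. fact (count X x) :: nat) = fact (size X)"
    using card_permutations_of_multiset_aux[of X] by simp
  hence "real (card (permutations_of_multiset X) * (\<Prod>x\<in>S. fact (count X x) :: nat)) = fact (size X)"
    by (metis of_nat_fact)
  moreover have "(\<Prod>x\<in>S. fact (count X x) :: real) \<noteq> 0" using assms(1) by simp
  ultimately show ?thesis by (simp add: eq_divide_eq)
qed

text \<open>The multivariate hypergeometric law: the probability that a uniformly random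
  arrangement of \<open>A\<close> starts with some arrangement of \<open>B\<close>.\<close>
lemma card_permutations_of_multiset_split_ratio:
  assumes B: "B \<subseteq># A" and S: "finite S" "set_mset A \<subseteq> S"
  shows "real (card (permutations_of_multiset B)) * real (card (permutations_of_multiset (A - B)))
           / real (card (permutations_of_multiset A))
       = (\<Prod>x\<in>S. real (count A x choose count B x)) / real (size A choose size B)"
proof -
  have BS: "set_mset B \<subseteq> S" using B S by (meson mset_subset_eqD subset_iff)
  have DS: "set_mset (A - B) \<subseteq> S" using S by (auto dest: in_diffD)
  have le: "count B x \<le> count A x" for x using B by (simp add: subseteq_mset_def)
  have szB: "size B \<le> size A" using B by (rule size_mset_mono)
  have fact_split: "(fact a :: real) = real (a choose b) * fact b * fact (a - b)" if "b \<le> a" for a b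
  proof -
    have "real (fact b * fact (a - b) * (a choose b)) = real (fact a)"
      using binomial_fact_lemma[OF that] by (simp only:)
    thus ?thesis by (simp add: algebra_simps)
  qed
  have factA: "(fact (count A x) :: real)
      = real (count A x choose count B x) * fact (count B x) * fact (count (A - B) x)" for x
    using fact_split[OF le[of x]] by simp
  have "(fact (size A) :: real) = real (size A choose size B) * fact (size B) * fact (size (A - B))"
    using fact_split[OF szB] B by (simp add: size_Diff_submset)
  moreover have "(\<Prod>x\<in>S. fact (count A x) :: real) = (\<Prod>x\<in>S. real (count A x choose count B x))
      * (\<Prod>x\<in>S. fact (count B x)) * (\<Prod>x\<in>S. fact (count (A - B) x))"
    unfolding factA by (simp add: prod.distrib)
  moreover have "real (size A choose size B) \<noteq> 0" using szB by simp
  moreover have "(\<Prod>x\<in>S. fact (f x) :: real) \<noteq> 0" for f using S(1) by simp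
  ultimately show ?thesis
    unfolding real_card_permutations_of_multiset[OF S] real_card_permutations_of_multiset[OF S(1) BS]
      real_card_permutations_of_multiset[OF S(1) DS]
    by (simp add: field_simps)
qed

lemma inj_on_permute_list:
  assumes p: "p permutes {..<n}"
  shows "inj_on (permute_list p) {xs. length xs = n}"
proof (rule inj_onI, rule nth_equalityI)
  fix xs ys :: "'a list" assume xs: "xs \<in> {xs. length xs = n}" and ys: "ys \<in> {xs. length xs = n}"
    and eq: "permute_list p xs = permute_list p ys"
  show "length xs = length ys" using xs ys by simp
  fix j assume "j < length xs"
  hence "j \<in> p ` {..<n}" using permutes_image[OF p] xs by simp
  then obtain i where i: "i < n" "j = p i" by auto
  have "xs ! p i = permute_list p xs ! i" using p xs i by (simp add: permute_list_nth)
  also have "\<dots> = ys ! p i" using p ys i eq by (simp add: permute_list_nth)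
  finally show "xs ! j = ys ! j" using i by simp
qed

lemma card_map_fibre_le:
  assumes zs: "zs \<in> permutations_of_multiset (image_mset f A)"
    and zs': "zs' \<in> permutations_of_multiset (image_mset f A)"
  shows "card {xs \<in> permutations_of_multiset A. map f xs = zs}
       \<le> card {xs \<in> permutations_of_multiset A. map f xs = zs'}"
proof -
  have "mset zs' = mset zs" using zs zs' by (simp add: permutations_of_multiset_def)
  then obtain p where p: "p permutes {..<length zs}" "permute_list p zs = zs'"
    using mset_eq_permutation by blast
  have len: "length xs = length zs" if "map f xs = zs" for xs using that by auto
  show ?thesis
  proof (rule card_inj_on_le[where f = "permute_list p"])
    show "inj_on (permute_list p) {xs \<in> permutations_of_multiset A. map f xs = zs}"
      by (rule inj_on_subset[OF inj_on_permute_list[OF p(1)]]) (use len in blast)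
    show "permute_list p ` {xs \<in> permutations_of_multiset A. map f xs = zs}
        \<subseteq> {xs \<in> permutations_of_multiset A. map f xs = zs'}"
    proof (rule image_subsetI)
      fix xs assume xs: "xs \<in> {xs \<in> permutations_of_multiset A. map f xs = zs}"
      hence "p permutes {..<length xs}" using p(1) len by auto
      thus "permute_list p xs \<in> {xs \<in> permutations_of_multiset A. map f xs = zs'}"
        using xs p(2) by (auto simp: permutations_of_multiset_def permute_list_map[symmetric])
    qed
  qed simp
qed

text \<open>Pushing a uniform permutation of \<open>A\<close> forward along \<open>map f\<close> gives a uniform
  permutation of \<open>image_mset f A\<close>, because all fibres have the same size.\<close>
lemma card_permutations_of_multiset_map:
  "card {xs \<in> permutations_of_multiset A. P (map f xs)} * card (permutations_of_multiset (image_mset f A))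
     = card {zs \<in> permutations_of_multiset (image_mset f A). P zs} * card (permutations_of_multiset A)"
proof -
  define F where "F zs = {xs \<in> permutations_of_multiset A. map f xs = zs}" for zs
  define Z where "Z = permutations_of_multiset (image_mset f A)"
  obtain z0 where z0: "z0 \<in> Z" unfolding Z_def using permutations_of_multiset_not_empty by blast
  have card_F: "card (F zs) = card (F z0)" if "zs \<in> Z" for zs
    using card_map_fibre_le[of zs f A z0] card_map_fibre_le[of z0 f A zs] that z0
    unfolding F_def Z_def by simp
  have count_by_fibres: "card {xs \<in> permutations_of_multiset A. Q (map f xs)} = card {zs \<in> Z. Q zs} * card (F z0)"
    for Q
  proof -
    have "{xs \<in> permutations_of_multiset A. Q (map f xs)} = (\<Union>zs\<in>{zs \<in> Z. Q zs}. F zs)"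
      unfolding F_def Z_def by (auto simp: permutations_of_multiset_def)
    also have "card \<dots> = (\<Sum>zs\<in>{zs \<in> Z. Q zs}. card (F zs))"
      by (rule card_UN_disjoint) (auto simp: F_def Z_def)
    also have "\<dots> = (\<Sum>zs\<in>{zs \<in> Z. Q zs}. card (F z0))" using card_F by (intro sum.cong) auto
    finally show ?thesis by simp
  qed
  show ?thesis
    using count_by_fibres[of P] count_by_fibres[of "\<lambda>_. True"] unfolding Z_def by simp
qed

lemma card_permutations_of_multiset_prefix:
  assumes sub: "B \<subseteq># C" and size: "size B = m"
  shows "card {zs \<in> permutations_of_multiset C. mset (take m zs) = B \<and> Q (drop m zs)}
       = card (permutations_of_multiset B) * card {qs \<in> permutations_of_multiset (C - B). Q qs}"
proof -
  let ?R = "{qs \<in> permutations_of_multiset (C - B). Q qs}"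
  have "{zs \<in> permutations_of_multiset C. mset (take m zs) = B \<and> Q (drop m zs)}
      = (\<lambda>(p, q). p @ q) ` (permutations_of_multiset B \<times> ?R)"
  proof safe
    fix zs assume zs: "zs \<in> permutations_of_multiset C" "Q (drop m zs)" "B = mset (take m zs)"
    have "mset (drop m zs) = C - B"
      using zs by (metis add_diff_cancel_left' append_take_drop_id mset_append permutations_of_multisetD)
    thus "zs \<in> (\<lambda>(p, q). p @ q) ` (permutations_of_multiset (mset (take m zs)) \<times>
        {qs \<in> permutations_of_multiset (C - mset (take m zs)). Q qs})"
      using zs by (intro image_eqI[of _ _ "(take m zs, drop m zs)"]) (auto simp: permutations_of_multiset_def)
  next
    fix p q assume p: "p \<in> permutations_of_multiset B" and q: "q \<in> permutations_of_multiset (C - B)" "Q q"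
    have "length p = m" using p size by (auto simp: permutations_of_multiset_def)
    thus "p @ q \<in> permutations_of_multiset C" "mset (take m (p @ q)) = B" "Q (drop m (p @ q))"
      using p q sub by (auto simp: permutations_of_multiset_def)
  qed
  moreover have "inj_on (\<lambda>(p, q). p @ q) (permutations_of_multiset B \<times> ?R)"
  proof (rule inj_onI, clarsimp)
    fix p q p' q' assume "p \<in> permutations_of_multiset B" "p' \<in> permutations_of_multiset B"
      and "p @ q = p' @ q'"
    thus "p = p' \<and> q = q'" by (simp add: length_finite_permutations_of_multiset)
  qed
  ultimately show ?thesis by (simp add: card_image card_cartesian_product)
qed

lemma permutations_of_multiset_prefix_empty:
  assumes "\<not> B \<subseteq># C"
  shows "{zs \<in> permutations_of_multiset C. mset (take m zs) = B \<and> Q (drop m zs)} = {}"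
  using assms by (auto simp: permutations_of_multiset_def)
    (metis append_take_drop_id mset_append mset_subset_eq_add_left)

lemma size_eq_sum_count:
  assumes "finite S" "set_mset X \<subseteq> S"
  shows "size X = (\<Sum>x\<in>S. count X x)"
proof -
  have "size X = (\<Sum>x\<in>set_mset X. count X x)" by (rule size_multiset_overloaded_eq)
  also have "\<dots> = (\<Sum>x\<in>S. count X x)"
    using assms by (intro sum.mono_neutral_left) (auto simp: not_in_iff)
  finally show ?thesis .
qed

lemma size_eq_size_filter_mset_add:
  "size C = size (filter_mset P C) + (\<Sum>y\<in>set_mset C. if \<not> P y then count C y else 0)"
proof -
  have "size C = size (filter_mset P C) + size (filter_mset (\<lambda>x. \<not> P x) C)"
    by (metis multiset_partition size_union)
  also have "size (filter_mset (\<lambda>x. \<not> P x) C) = (\<Sum>y\<in>set_mset C. if \<not> P y then count C y else 0)"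
    using size_eq_sum_count[of "set_mset C" "filter_mset (\<lambda>x. \<not> P x) C"] by simp
  finally show ?thesis .
qed

lemma card_permutations_of_multiset_find_by_head:
  assumes "C \<noteq> {#}"
  shows "card {qs \<in> permutations_of_multiset C. find P qs = Some a}
       = (\<Sum>y\<in>set_mset C. if P y then (if y = a then card (permutations_of_multiset (C - {#y#})) else 0)
            else card {qs \<in> permutations_of_multiset (C - {#y#}). find P qs = Some a})"
proof -
  have "{qs \<in> permutations_of_multiset C. find P qs = Some a}
      = (\<Union>y\<in>set_mset C. (#) y ` {qs \<in> permutations_of_multiset (C - {#y#}). find P (y # qs) = Some a})"
    by (subst permutations_of_multiset_nonempty[OF assms]) blast
  hence "card {qs \<in> permutations_of_multiset C. find P qs = Some a}
      = (\<Sum>y\<in>set_mset C. card {qs \<in> permutations_of_multiset (C - {#y#}). find P (y # qs) = Some a})"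
    by (simp only:) (subst card_UN_disjoint; auto simp: card_image)
  also have "\<dots> = (\<Sum>y\<in>set_mset C. if P y then (if y = a then card (permutations_of_multiset (C - {#y#})) else 0)
      else card {qs \<in> permutations_of_multiset (C - {#y#}). find P qs = Some a})"
    by (intro sum.cong) auto
  finally show ?thesis .
qed

text \<open>The first element satisfying \<open>P\<close> in a uniform permutation of \<open>C\<close> is uniformly
  distributed over the occurrences of such elements in \<open>C\<close>.\<close>
lemma card_permutations_of_multiset_find:
  assumes Pa: "P a"
  shows "card {qs \<in> permutations_of_multiset C. find P qs = Some a} * size (filter_mset P C)
       = count C a * card (permutations_of_multiset C)"
proof (induction C rule: multiset_remove_induct)
  case (remove C)
  define S where "S = set_mset C"
  define h where "h D = card {qs \<in> permutations_of_multiset D. find P qs = Some a}" for D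
  define pc where "pc D = card (permutations_of_multiset D)" for D :: "'a multiset"
  define p where "p = size (filter_mset P C)"
  have h_C: "h C * p * size C
      = (\<Sum>y\<in>S. (if P y then (if y = a then pc (C - {#y#}) else 0) else h (C - {#y#})) * p * size C)"
    unfolding h_def pc_def S_def card_permutations_of_multiset_find_by_head[OF remove.hyps]
    by (simp add: sum_distrib_right)
  have remove_pc: "pc (C - {#y#}) * size C = count C y * pc C" if "y \<in> S" for y
    using card_permutations_of_multiset_remove_aux[of y C] that unfolding pc_def S_def
    by (metis mult.commute)
  have head_summand: "(if P y then (if y = a then pc (C - {#y#}) else 0) else h (C - {#y#})) * p * size C
      = (if y = a then p * count C a * pc C else 0)
        + count C a * pc C * (if \<not> P y then count C y else 0)" if y: "y \<in> S" for y
  proof (cases "P y")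
    case True
    have "pc (C - {#y#}) * p * size C = p * (pc (C - {#y#}) * size C)" by simp
    also have "\<dots> = p * count C y * pc C" by (simp add: remove_pc[OF y])
    finally show ?thesis using True by auto
  next
    case False
    have "filter_mset P (C - {#y#}) = filter_mset P C" "count (C - {#y#}) a = count C a"
      using y False Pa by (auto simp: S_def)
    hence "h (C - {#y#}) * p = count C a * pc (C - {#y#})"
      using remove.IH[of y] y unfolding h_def pc_def p_def S_def by simp
    hence "h (C - {#y#}) * p * size C = count C a * (pc (C - {#y#}) * size C)" by simp
    also have "\<dots> = count C a * pc C * count C y" by (simp add: remove_pc[OF y])
    finally show ?thesis using False Pa by auto
  qed
  have size_C: "size C = p + (\<Sum>y\<in>S. if \<not> P y then count C y else 0)"
    unfolding p_def S_def by (rule size_eq_size_filter_mset_add)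
  have "h C * p * size C = (\<Sum>y\<in>S. (if y = a then p * count C a * pc C else 0)
      + count C a * pc C * (if \<not> P y then count C y else 0))"
    unfolding h_C by (rule sum.cong) (simp_all add: head_summand)
  also have "\<dots> = p * count C a * pc C + count C a * pc C * (\<Sum>y\<in>S. if \<not> P y then count C y else 0)"
    by (simp add: sum.distrib sum_distrib_left S_def not_in_iff)
  also have "\<dots> = count C a * pc C * size C" unfolding size_C by (simp add: algebra_simps)
  finally have "h C * p * size C = count C a * pc C * size C" .
  moreover have "size C > 0" using remove.hyps by (simp add: nonempty_has_size)
  ultimately show ?case using remove.hyps unfolding h_def pc_def p_def by simp
qed simp

lemma real_card_permutations_of_multiset_find:
  assumes Pa: "P a"
  shows "real (card {qs \<in> permutations_of_multiset C. find P qs = Some a})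
       = real (count C a) * real (card (permutations_of_multiset C)) / real (size (filter_mset P C))"
proof (cases "size (filter_mset P C) = 0")
  case True
  hence "a \<notin># C" using Pa by auto
  hence empty: "{qs \<in> permutations_of_multiset C. find P qs = Some a} = {}"
    by (auto simp: permutations_of_multiset_def find_Some_iff dest: nth_mem)
  show ?thesis unfolding empty using True by simp
next
  case False
  thus ?thesis using card_permutations_of_multiset_find[of P a C, OF Pa]
    by (simp add: field_simps flip: of_nat_mult)
qed

definition falling_fact :: "nat \<Rightarrow> nat \<Rightarrow> real" where
  "falling_fact a j = (\<Prod>i<j. real a - real i)"

lemma fact_eq_falling_fact: "j \<le> a \<Longrightarrow> fact a = falling_fact a j * fact (a - j)"
proof (induction j)
  case 0
  then show ?case by (simp add: falling_fact_def)
next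
  case (Suc j)
  have "fact (a - j) = real (a - j) * (fact (a - Suc j) :: real)"
    using Suc.prems by (metis Suc_diff_Suc fact_Suc less_eq_Suc_le)
  moreover have "real (a - j) = real a - real j" using Suc.prems by simp
  ultimately show ?case using Suc by (simp add: falling_fact_def)
qed

lemma falling_fact_add: "i \<le> a \<Longrightarrow> falling_fact a (i + j) = falling_fact a i * falling_fact (a - i) j"
  by (induction j) (auto simp: falling_fact_def)

lemma binomial_ratio_eq_falling_fact:
  assumes "l \<le> M" "l \<le> K" "K \<le> N" "M - l \<le> N - K"
  shows "real ((N - K) choose (M - l)) / real (N choose M)
       = falling_fact M l * falling_fact (N - M) (K - l) / falling_fact N K"
proof -
  have MN: "M \<le> N" and KNM: "K - l \<le> N - M" and rest: "N - M - (K - l) = N - K - (M - l)"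
    using assms by linarith+
  have M: "fact M = falling_fact M l * fact (M - l)"
    and NM: "fact (N - M) = falling_fact (N - M) (K - l) * fact (N - K - (M - l))"
    and N: "fact N = falling_fact N K * fact (N - K)"
    using fact_eq_falling_fact[OF assms(1)] fact_eq_falling_fact[OF KNM] fact_eq_falling_fact[OF assms(3)]
    by (simp_all only: rest)
  have "falling_fact N K \<noteq> 0" using N by (metis fact_nonzero mult_zero_left)
  thus ?thesis
    unfolding binomial_fact[OF MN] binomial_fact[OF assms(4)] using M NM N by (simp add: field_simps)
qed

section \<open>Decomposing the success event\<close>

definition rank_multiset :: "nat \<Rightarrow> nat \<Rightarrow> nat multiset" where
  "rank_multiset n k = (\<Sum>r\<in>{1..n}. replicate_mset k r)"

lemma count_rank_multiset: "count (rank_multiset n k) x = (if 1 \<le> x \<and> x \<le> n then k else 0)"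
proof -
  have "count (rank_multiset n k) x = (\<Sum>r\<in>{1..n}. if r = x then k else 0)"
    unfolding rank_multiset_def count_sum by (intro sum.cong) auto
  also have "\<dots> = (if 1 \<le> x \<and> x \<le> n then k else 0)" by simp
  finally show ?thesis .
qed

lemma set_mset_rank_multiset: "set_mset (rank_multiset n k) \<subseteq> {1..n}"
  by (auto simp: count_rank_multiset simp flip: count_greater_zero_iff split: if_splits)

lemma size_rank_multiset: "size (rank_multiset n k) = k * n"
  using size_eq_sum_count[OF _ set_mset_rank_multiset, of n k] by (simp add: count_rank_multiset)

lemma arrangements_eq_permutations_of_multiset:
  "arrangements n k = permutations_of_multiset (rank_multiset n k)"
proof (intro equalityI subsetI)
  fix xs assume xs: "xs \<in> arrangements n k"
  have "count (mset xs) x = count (rank_multiset n k) x" for x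
  proof (cases "1 \<le> x \<and> x \<le> n")
    case False
    hence "x \<notin> set xs" using xs by (auto simp: arrangements_def)
    hence "count (mset xs) x = 0" by simp
    thus ?thesis using False by (metis count_rank_multiset)
  qed (use xs in \<open>simp add: arrangements_def count_mset count_rank_multiset\<close>)
  thus "xs \<in> permutations_of_multiset (rank_multiset n k)"
    by (simp add: permutations_of_multiset_def multiset_eqI)
next
  fix xs assume "xs \<in> permutations_of_multiset (rank_multiset n k)"
  hence m: "mset xs = rank_multiset n k" by (simp add: permutations_of_multiset_def)
  have "length xs = k * n" using m size_rank_multiset by (metis size_mset)
  moreover have "set xs \<subseteq> {1..n}" using m set_mset_rank_multiset by (metis set_mset_mset)
  moreover have "\<forall>r\<in>{1..n}. count_list xs r = k"
    using m by (auto simp: count_rank_multiset simp flip: count_mset)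
  ultimately show "xs \<in> arrangements n k" by (simp add: arrangements_def)
qed

text \<open>\<open>success_event n k M t l\<close>: the first \<open>M\<close> items have maximum \<open>t\<close>, attained exactly
  \<open>l\<close> times, and the first later item of rank at least \<open>t\<close> has rank \<open>n\<close>.\<close>
definition cut_below :: "nat \<Rightarrow> nat \<Rightarrow> nat" where
  "cut_below t x = (if x < t then 0 else x)"

definition prefix_profile :: "nat \<Rightarrow> nat \<Rightarrow> nat \<Rightarrow> nat multiset" where
  "prefix_profile M t l = replicate_mset l t + replicate_mset (M - l) 0"

lemma count_prefix_profile:
  "count (prefix_profile M t l) x = (if x = t then l else 0) + (if x = 0 then M - l else 0)"
  by (simp add: prefix_profile_def)

definition success_event :: "nat \<Rightarrow> nat \<Rightarrow> nat \<Rightarrow> nat \<Rightarrow> nat \<Rightarrow> nat list set" where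
  "success_event n k M t l = {xs \<in> permutations_of_multiset (rank_multiset n k).
      mset (take M (map (cut_below t) xs)) = prefix_profile M t l \<and>
      find (\<lambda>x. t \<le> x) (drop M (map (cut_below t) xs)) = Some n}"

lemma mset_map_cut_below:
  assumes "1 \<le> t" "\<forall>x\<in>set ys. x \<le> t"
  shows "mset (map (cut_below t) ys) = prefix_profile (length ys) t (count_list ys t)"
  using assms(2)
proof (induction ys)
  case (Cons x ys)
  have "count_list ys t \<le> length ys" by (rule count_le_length)
  thus ?case using Cons assms(1) by (auto simp: cut_below_def prefix_profile_def Suc_diff_le)
qed (simp add: prefix_profile_def)

lemma prefix_profile_imp_Max:
  assumes t: "1 \<le> t" and m: "mset (map (cut_below t) ys) = prefix_profile M t l" and l: "1 \<le> l"
  shows "Max (set ys) = t"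
proof (rule Max_eqI)
  fix x assume "x \<in> set ys"
  hence "cut_below t x \<in># prefix_profile M t l" using m by (metis image_eqI mset_map set_image_mset set_mset_mset)
  thus "x \<le> t" using t by (auto simp: prefix_profile_def cut_below_def split: if_splits)
next
  have "t \<in># prefix_profile M t l" using l by (simp add: prefix_profile_def)
  hence "t \<in> cut_below t ` set ys" using m by (metis mset_map set_image_mset set_mset_mset)
  thus "t \<in> set ys" using t by (auto simp: cut_below_def split: if_splits)
qed simp

lemma find_map_cut_below:
  "1 \<le> t \<Longrightarrow> find (\<lambda>x. t \<le> x) (map (cut_below t) ys) = find (\<lambda>x. t \<le> x) ys"
  by (induction ys) (auto simp: cut_below_def)

lemma strategy_succeeds_iff:
  assumes n: "n \<ge> 1" and M: "1 \<le> M" "M \<le> k * n"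
    and xs: "xs \<in> permutations_of_multiset (rank_multiset n k)"
  shows "strategy_succeeds n M xs \<longleftrightarrow> (\<exists>t\<in>{1..n}. \<exists>l\<in>{1..k}. xs \<in> success_event n k M t l)"
proof
  have mx: "mset xs = rank_multiset n k" using xs by (simp add: permutations_of_multiset_def)
  have lx: "length xs = k * n" using mx size_rank_multiset by (metis size_mset)
  have sx: "set xs \<subseteq> {1..n}" using mx set_mset_rank_multiset by (metis set_mset_mset)
  define ys where "ys = take M xs"
  define t where "t = Max (set ys)"
  define l where "l = count_list ys t"
  assume succ: "strategy_succeeds n M xs"
  have ly: "length ys = M" using lx M by (simp add: ys_def)
  hence "t \<in> set ys" unfolding t_def using M by (intro Max_in) auto
  moreover have "set ys \<subseteq> set xs" unfolding ys_def by (rule set_take_subset)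
  ultimately have t: "t \<in> {1..n}" using sx by auto
  have l1: "1 \<le> l" using \<open>t \<in> set ys\<close> unfolding l_def by (metis count_list_0_iff less_one not_le)
  have "count_list xs t = count_list ys t + count_list (drop M xs) t"
    unfolding ys_def by (metis append_take_drop_id count_list_append)
  moreover have "count_list xs t = k" using mx t by (simp add: count_rank_multiset flip: count_mset)
  ultimately have lk: "l \<le> k" unfolding l_def by simp
  have "mset (map (cut_below t) ys) = prefix_profile M t l"
    using mset_map_cut_below[of t ys] t ly unfolding l_def t_def by simp
  moreover have "find (\<lambda>x. t \<le> x) (drop M xs) = Some n"
    using succ unfolding strategy_succeeds_def t_def ys_def by (auto split: option.splits)
  ultimately have "xs \<in> success_event n k M t l"
    using xs t find_map_cut_below[of t "drop M xs"]
    by (simp add: success_event_def ys_def take_map drop_map)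
  thus "\<exists>t\<in>{1..n}. \<exists>l\<in>{1..k}. xs \<in> success_event n k M t l"
    using t l1 lk by (intro bexI[of _ t] bexI[of _ l]) auto
next
  assume "\<exists>t\<in>{1..n}. \<exists>l\<in>{1..k}. xs \<in> success_event n k M t l"
  then obtain t l where t: "t \<in> {1..n}" and l: "l \<in> {1..k}" and e: "xs \<in> success_event n k M t l"
    by blast
  have "mset (map (cut_below t) (take M xs)) = prefix_profile M t l"
    using e by (simp add: success_event_def take_map)
  hence "Max (set (take M xs)) = t" using prefix_profile_imp_Max t l by auto
  moreover have "find (\<lambda>x. t \<le> x) (drop M xs) = Some n"
    using e find_map_cut_below[of t "drop M xs"] t by (simp add: success_event_def drop_map)
  ultimately show "strategy_succeeds n M xs" unfolding strategy_succeeds_def by simp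
qed

lemma success_event_disjoint:
  assumes "1 \<le> t" "1 \<le> t'" "1 \<le> l" "1 \<le> l'"
    and "xs \<in> success_event n k M t l" "xs \<in> success_event n k M t' l'"
  shows "t = t' \<and> l = l'"
proof -
  have m: "mset (map (cut_below t) (take M xs)) = prefix_profile M t l"
    and m': "mset (map (cut_below t') (take M xs)) = prefix_profile M t' l'"
    using assms by (simp_all add: success_event_def take_map)
  have "t = t'" using prefix_profile_imp_Max[OF _ m] prefix_profile_imp_Max[OF _ m'] assms by simp
  moreover from this have "count (prefix_profile M t l) t = count (prefix_profile M t l') t"
    using m m' by simp
  ultimately show ?thesis using assms(1) by (simp add: prefix_profile_def)
qed

lemma card_success_eq_sum:
  assumes n: "n \<ge> 1" and M: "1 \<le> M" "M \<le> k * n"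
  shows "card {xs \<in> arrangements n k. strategy_succeeds n M xs}
       = (\<Sum>t\<in>{1..n}. \<Sum>l\<in>{1..k}. card (success_event n k M t l))"
proof -
  have "{xs \<in> arrangements n k. strategy_succeeds n M xs}
      = (\<Union>p\<in>{1..n} \<times> {1..k}. success_event n k M (fst p) (snd p))"
    (is "?L = ?R")
  proof (intro equalityI subsetI)
    fix xs assume "xs \<in> ?L"
    thus "xs \<in> ?R" using strategy_succeeds_iff[OF n M, of xs]
      by (auto simp: arrangements_eq_permutations_of_multiset)
  next
    fix xs assume xs: "xs \<in> ?R"
    hence "xs \<in> permutations_of_multiset (rank_multiset n k)" by (auto simp: success_event_def)
    thus "xs \<in> ?L" using xs strategy_succeeds_iff[OF n M, of xs]
      by (auto simp: arrangements_eq_permutations_of_multiset)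
  qed
  moreover have "finite (success_event n k M t l)" for t l
    by (rule finite_subset[of _ "permutations_of_multiset (rank_multiset n k)"])
      (auto simp: success_event_def)
  ultimately have "card {xs \<in> arrangements n k. strategy_succeeds n M xs}
      = (\<Sum>p\<in>{1..n} \<times> {1..k}. card (success_event n k M (fst p) (snd p)))"
    by (simp only:) (rule card_UN_disjoint; use success_event_disjoint in fastforce)
  thus ?thesis by (simp add: sum.cartesian_product case_prod_beta)
qed

section \<open>The exact success probability\<close>

lemma count_image_cut_below_rank_multiset:
  assumes t: "1 \<le> t" "t \<le> n"
  shows "count (image_mset (cut_below t) (rank_multiset n k)) x
       = (if x = 0 then k * (t - 1) else if t \<le> x \<and> x \<le> n then k else 0)"
proof -
  have "count (image_mset (cut_below t) (rank_multiset n k)) x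
      = (\<Sum>y\<in>cut_below t -` {x} \<inter> set_mset (rank_multiset n k). count (rank_multiset n k) y)"
    by (rule count_image_mset)
  also have "\<dots> = (\<Sum>y\<in>cut_below t -` {x} \<inter> {1..n}. k)"
    using set_mset_rank_multiset[of n k]
    by (intro sum.mono_neutral_cong_left) (auto simp: count_rank_multiset not_in_iff)
  also have "cut_below t -` {x} \<inter> {1..n}
      = (if x = 0 then {1..<t} else if t \<le> x \<and> x \<le> n then {x} else {})"
    using t by (auto simp: cut_below_def split: if_splits)
  finally show ?thesis by auto
qed

lemma prefix_profile_split_ratio:
  assumes t: "1 \<le> t" "t \<le> n" and l: "l \<le> k" "l \<le> M" "M - l \<le> k * (t - 1)"
  defines "A \<equiv> image_mset (cut_below t) (rank_multiset n k)" and "B \<equiv> prefix_profile M t l"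
  shows "B \<subseteq># A"
    and "real (card (permutations_of_multiset B)) * real (card (permutations_of_multiset (A - B)))
           / real (card (permutations_of_multiset A))
       = real (k choose l) * real (k * (t - 1) choose (M - l)) / real (k * n choose M)"
proof -
  let ?S = "insert 0 (insert t {t<..n})"
  have count_A: "count A x = (if x = 0 then k * (t - 1) else if t \<le> x \<and> x \<le> n then k else 0)" for x
    unfolding A_def by (rule count_image_cut_below_rank_multiset[OF t])
  have count_B: "count B x = (if x = t then l else 0) + (if x = 0 then M - l else 0)" for x
    unfolding B_def by (rule count_prefix_profile)
  show sub: "B \<subseteq># A" using t l by (auto simp: subseteq_mset_def count_A count_B)
  have S: "set_mset A \<subseteq> ?S" by (auto simp: count_A simp flip: count_greater_zero_iff split: if_splits)
  have "size A = k * n" unfolding A_def by (simp add: size_rank_multiset)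
  moreover have "size B = M" using l by (simp add: B_def prefix_profile_def)
  moreover have "(\<Prod>x\<in>?S. real (count A x choose count B x))
      = real (k * (t - 1) choose (M - l)) * real (k choose l)"
    using t by (simp add: count_A count_B)
  ultimately show "real (card (permutations_of_multiset B)) * real (card (permutations_of_multiset (A - B)))
           / real (card (permutations_of_multiset A))
       = real (k choose l) * real (k * (t - 1) choose (M - l)) / real (k * n choose M)"
    using card_permutations_of_multiset_split_ratio[OF sub _ S] by simp
qed

lemma prefix_profile_infeasible:
  assumes t: "1 \<le> t" "t \<le> n" and infeasible: "\<not> (l \<le> M \<and> M - l \<le> k * (t - 1))"
  shows "{zs \<in> permutations_of_multiset (image_mset (cut_below t) (rank_multiset n k)).
      mset (take M zs) = prefix_profile M t l \<and> Q (drop M zs)} = {}"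
proof (cases "l \<le> M")
  case True
  hence "\<not> prefix_profile M t l \<subseteq># image_mset (cut_below t) (rank_multiset n k)"
    using infeasible
    by (auto simp: subseteq_mset_def count_image_cut_below_rank_multiset[OF t] count_prefix_profile
        dest!: spec[of _ 0])
  thus ?thesis by (rule permutations_of_multiset_prefix_empty)
next
  case False
  hence "mset (take M zs) \<noteq> prefix_profile M t l" for zs
    by (auto simp: prefix_profile_def dest: arg_cong[of _ _ size])
  thus ?thesis by blast
qed

text \<open>With \<open>K = k (s + 1)\<close> items of rank at least \<open>n - s\<close>, the product below equals
  \<open>C(k n - K, M - l) / C(k n, M)\<close>; written as a product, each factor tends to \<open>c\<close>
  or to \<open>1 - c\<close>.\<close>
definition hyp_factor :: "nat \<Rightarrow> nat \<Rightarrow> nat \<Rightarrow> nat \<Rightarrow> nat \<Rightarrow> real" where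
  "hyp_factor n k M s l = (\<Prod>i<l. (real M - real i) / (real (k * n) - real i)) *
      (\<Prod>i<k * (s + 1) - l. (real (k * n) - real M - real i) / (real (k * n) - real l - real i))"

text \<open>The chance that the first later item of rank at least \<open>n - s\<close> has rank \<open>n\<close>:
  \<open>k\<close> such items remain (only \<open>k - l\<close> if \<open>s = 0\<close>) among \<open>k (s + 1) - l\<close>.\<close>
definition hit_weight :: "nat \<Rightarrow> nat \<Rightarrow> nat \<Rightarrow> real" where
  "hit_weight k s l = real (k - (if s = 0 then l else 0)) / real (k * (s + 1) - l)"

lemma prefix_profile_hit_ratio:
  fixes M :: nat
  assumes s: "s < n" and l: "l \<le> k"
  defines "A \<equiv> image_mset (cut_below (n - s)) (rank_multiset n k)" and "B \<equiv> prefix_profile M (n - s) l"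
  shows "real (card {qs \<in> permutations_of_multiset (A - B). find (\<lambda>x. n - s \<le> x) qs = Some n})
       = real (card (permutations_of_multiset (A - B))) * hit_weight k s l"
proof -
  define t where "t = n - s"
  have t: "1 \<le> t" "t \<le> n" using s unfolding t_def by auto
  have count_A: "count A x = (if x = 0 then k * (t - 1) else if t \<le> x \<and> x \<le> n then k else 0)" for x
    unfolding A_def t_def by (rule count_image_cut_below_rank_multiset) (use s in auto)
  have count_B: "count B x = (if x = t then l else 0) + (if x = 0 then M - l else 0)" for x
    unfolding B_def t_def by (rule count_prefix_profile)
  have "count (A - B) n = k - (if s = 0 then l else 0)"
    using t s by (auto simp: count_A count_B t_def)
  moreover have "size (filter_mset (\<lambda>x. t \<le> x) (A - B)) = k * (s + 1) - l"
  proof -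
    let ?S = "insert t {t<..n}"
    have "set_mset (filter_mset (\<lambda>x. t \<le> x) (A - B)) \<subseteq> ?S"
      by (auto simp: count_A count_B simp flip: count_greater_zero_iff split: if_splits)
    hence "size (filter_mset (\<lambda>x. t \<le> x) (A - B)) = (\<Sum>x\<in>?S. count (A - B) x)"
      using size_eq_sum_count[of ?S] by simp
    also have "\<dots> = (k - l) + k * (n - t)" using t by (simp add: count_A count_B)
    also have "\<dots> = k * (s + 1) - l" using l s unfolding t_def by (simp add: algebra_simps)
    finally show ?thesis .
  qed
  ultimately show ?thesis
    using real_card_permutations_of_multiset_find[of "\<lambda>x. t \<le> x" n "A - B"] t
    unfolding t_def by (simp add: hit_weight_def)
qed

lemma hyp_factor_eq_0:
  assumes "\<not> (l \<le> M \<and> M - l \<le> k * (n - s - 1))" "s < n" "l \<le> k" "M \<le> k * n"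
  shows "hyp_factor n k M s l = 0"
proof (cases "l \<le> M")
  case False
  hence "(\<Prod>i<l. (real M - real i) / (real (k * n) - real i)) = 0"
    by (intro prod_zero) (auto intro!: bexI[of _ M])
  thus ?thesis by (simp add: hyp_factor_def)
next
  case True
  have "k * (s + 1) + k * (n - s - 1) = k * n"
    using assms(2) by (metis add_mult_distrib2 Suc_eq_plus1 Suc_leI le_add_diff_inverse diff_diff_left)
  hence "k * n - M < k * (s + 1) - l" using True assms by linarith
  hence "(\<Prod>i<k * (s + 1) - l. (real (k * n) - real M - real i) / (real (k * n) - real l - real i)) = 0"
    using assms by (intro prod_zero) (auto intro!: bexI[of _ "k * n - M"])
  thus ?thesis by (simp add: hyp_factor_def)
qed

lemma hyp_factor_eq_binomial_ratio:
  assumes "l \<le> M" "M - l \<le> k * (n - s - 1)" "s < n" "l \<le> k"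
  shows "hyp_factor n k M s l = real (k * (n - s - 1) choose (M - l)) / real (k * n choose M)"
proof -
  let ?N = "k * n" and ?K = "k * (s + 1)"
  have NK: "?N - ?K = k * (n - s - 1)" by (simp add: diff_mult_distrib2)
  have KN: "?K \<le> ?N" using assms(3) by (intro mult_le_mono2) simp
  have lK: "l \<le> ?K" using assms(4) by (simp add: trans_le_add1)
  have MN: "M \<le> ?N" using assms NK KN lK by linarith
  have prod_ratio: "(\<Prod>i<j. (real a - real i) / (real b - real i)) = falling_fact a j / falling_fact b j"
    for a b j by (simp add: falling_fact_def prod_dividef)
  have "hyp_factor n k M s l
      = falling_fact M l / falling_fact ?N l * (falling_fact (?N - M) (?K - l) / falling_fact (?N - l) (?K - l))"
    unfolding hyp_factor_def prod_ratio[symmetric] using MN lK KN by simp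
  also have "\<dots> = falling_fact M l * falling_fact (?N - M) (?K - l) / falling_fact ?N ?K"
    using falling_fact_add[of l ?N "?K - l"] lK KN by simp
  also have "\<dots> = real ((?N - ?K) choose (M - l)) / real (?N choose M)"
    using binomial_ratio_eq_falling_fact[of l M ?K ?N] assms lK KN NK by simp
  finally show ?thesis unfolding NK .
qed

lemma real_card_success_event:
  assumes M: "M \<le> k * n" and s: "s < n" and l: "1 \<le> l" "l \<le> k"
  shows "real (card (success_event n k M (n - s) l))
       = real (card (permutations_of_multiset (rank_multiset n k)))
         * (real (k choose l) * hyp_factor n k M s l * hit_weight k s l)"
proof -
  define t where "t = n - s"
  have t: "1 \<le> t" "t \<le> n" and t_1: "n - s - 1 = t - 1" using s unfolding t_def by auto
  define A where "A = image_mset (cut_below t) (rank_multiset n k)"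
  define B where "B = prefix_profile M t l"
  define Z where "Z = {zs \<in> permutations_of_multiset A.
    mset (take M zs) = B \<and> find (\<lambda>x. t \<le> x) (drop M zs) = Some n}"
  have "card (success_event n k M t l) * card (permutations_of_multiset A)
      = card Z * card (permutations_of_multiset (rank_multiset n k))"
    unfolding success_event_def Z_def A_def B_def by (rule card_permutations_of_multiset_map)
  moreover have "card (permutations_of_multiset A) > 0" by (simp add: card_gt_0_iff)
  ultimately have coarse: "real (card (success_event n k M t l))
      = real (card (permutations_of_multiset (rank_multiset n k)))
        * (real (card Z) / real (card (permutations_of_multiset A)))"
    by (simp add: field_simps flip: of_nat_mult)
  show ?thesis
  proof (cases "l \<le> M \<and> M - l \<le> k * (t - 1)")
    case False
    hence "Z = {}" unfolding Z_def A_def B_def by (rule prefix_profile_infeasible[OF t])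
    moreover have "hyp_factor n k M s l = 0"
      using hyp_factor_eq_0[of l M k n s] False s l M unfolding t_1 by simp
    ultimately show ?thesis using coarse unfolding t_def by simp
  next
    case True
    hence ratio: "B \<subseteq># A"
      "real (card (permutations_of_multiset B)) * real (card (permutations_of_multiset (A - B)))
         / real (card (permutations_of_multiset A))
       = real (k choose l) * hyp_factor n k M s l"
      using prefix_profile_split_ratio[OF t l(2)] hyp_factor_eq_binomial_ratio[of l M k n s] s l
      unfolding A_def B_def t_1 by auto
    have "size B = M" using True by (simp add: B_def prefix_profile_def)
    hence "card Z = card (permutations_of_multiset B)
        * card {qs \<in> permutations_of_multiset (A - B). find (\<lambda>x. t \<le> x) qs = Some n}"
      unfolding Z_def by (rule card_permutations_of_multiset_prefix[OF ratio(1)])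
    hence "real (card Z) / real (card (permutations_of_multiset A))
        = real (k choose l) * hyp_factor n k M s l * hit_weight k s l"
      using prefix_profile_hit_ratio[OF s l(2), of M] unfolding ratio(2)[symmetric] A_def B_def t_def
      by simp
    thus ?thesis using coarse unfolding t_def by simp
  qed
qed

lemma success_prob_eq_sum:
  assumes n: "1 \<le> n" and M: "1 \<le> M" "M \<le> k * n"
  shows "success_prob n k M
       = (\<Sum>s<n. \<Sum>l=1..k. real (k choose l) * hyp_factor n k M s l * hit_weight k s l)"
proof -
  have "(\<Sum>t=1..n. \<Sum>l=1..k. real (card (success_event n k M t l)))
      = (\<Sum>s<n. \<Sum>l=1..k. real (card (success_event n k M (n - s) l)))"
    by (rule sum.reindex_bij_witness[of _ "\<lambda>s. n - s" "\<lambda>t. n - t"]) auto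
  also have "\<dots> = real (card (arrangements n k))
      * (\<Sum>s<n. \<Sum>l=1..k. real (k choose l) * hyp_factor n k M s l * hit_weight k s l)"
    using M by (simp add: real_card_success_event arrangements_eq_permutations_of_multiset sum_distrib_left)
  finally show ?thesis
    using card_success_eq_sum[OF n M] unfolding success_prob_def
    by (simp add: arrangements_eq_permutations_of_multiset card_gt_0_iff)
qed

section \<open>The limit\<close>

lemma tendsto_diff_divide_diff:
  fixes X Y :: "nat \<Rightarrow> real"
  assumes XY: "(\<lambda>n. X n / Y n) \<longlonglongrightarrow> c" and Y: "filterlim Y at_top sequentially"
  shows "(\<lambda>n. (X n - a) / (Y n - b)) \<longlonglongrightarrow> c"
proof -
  have Y_inf: "filterlim Y at_infinity sequentially" using Y by (rule filterlim_at_top_imp_at_infinity)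
  have "(\<lambda>n. (X n / Y n - a / Y n) / (1 - b / Y n)) \<longlonglongrightarrow> (c - 0) / (1 - 0)"
    by (intro tendsto_intros XY tendsto_divide_0[OF _ Y_inf]) auto
  moreover have "eventually (\<lambda>n. max b 0 < Y n) sequentially"
    using Y unfolding filterlim_at_top_dense by blast
  hence "eventually (\<lambda>n. (X n / Y n - a / Y n) / (1 - b / Y n) = (X n - a) / (Y n - b)) sequentially"
    by eventually_elim (auto simp: field_simps)
  ultimately show ?thesis by (simp add: Lim_transform_eventually)
qed

lemma filterlim_real_mult_sequentially:
  assumes "k \<ge> 1"
  shows "filterlim (\<lambda>n. real (k * n)) at_top sequentially"
proof (rule filterlim_at_top_mono[OF filterlim_real_sequentially])
  have "real n \<le> real (k * n)" for n using assms by (intro of_nat_mono) simp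
  thus "eventually (\<lambda>n. real n \<le> real (k * n)) sequentially" by simp
qed

lemma hyp_factor_tendsto:
  assumes k: "k \<ge> 1" and Mc: "(\<lambda>n. real (M n) / real (k * n)) \<longlonglongrightarrow> c"
  shows "(\<lambda>n. hyp_factor n k (M n) s l) \<longlonglongrightarrow> c ^ l * (1 - c) ^ (k * (s + 1) - l)"
proof -
  note N = filterlim_real_mult_sequentially[OF k]
  have "(\<lambda>n. 1 - real (M n) / real (k * n)) \<longlonglongrightarrow> 1 - c" by (intro tendsto_intros Mc)
  moreover have "eventually (\<lambda>n. 1 - real (M n) / real (k * n)
      = (real (k * n) - real (M n)) / real (k * n)) sequentially"
    using eventually_gt_at_top[of "0::nat"] by eventually_elim (use k in \<open>simp add: field_simps\<close>)
  ultimately have "(\<lambda>n. (real (k * n) - real (M n)) / real (k * n)) \<longlonglongrightarrow> 1 - c"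
    by (rule Lim_transform_eventually)
  from tendsto_diff_divide_diff[OF this N, of "real i" "real l + real i" for i]
  have "(\<lambda>n. (real (k * n) - real (M n) - real i) / (real (k * n) - real l - real i)) \<longlonglongrightarrow> 1 - c"
    for i by (simp add: diff_diff_eq)
  hence "(\<lambda>n. hyp_factor n k (M n) s l) \<longlonglongrightarrow> (\<Prod>i<l. c) * (\<Prod>i<k * (s + 1) - l. 1 - c)"
    unfolding hyp_factor_def by (intro tendsto_mult tendsto_prod tendsto_diff_divide_diff[OF Mc N])
  thus ?thesis by simp
qed

lemma diff_divide_diff_le_divide:
  fixes a b i :: real
  assumes "0 \<le> i" "i < a" "a \<le> b"
  shows "(a - i) / (b - i) \<le> a / b"
proof -
  have "i * a \<le> i * b" using assms by (intro mult_left_mono) auto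
  thus ?thesis using assms by (simp add: field_simps)
qed

lemma hit_weight_bounds:
  assumes "1 \<le> l" "l \<le> k"
  shows "0 \<le> hit_weight k s l" "hit_weight k s l \<le> 1"
proof -
  have "k - (if s = 0 then l else 0) \<le> k * (s + 1) - l" using assms by (cases s) auto
  thus "0 \<le> hit_weight k s l" "hit_weight k s l \<le> 1"
    unfolding hit_weight_def by (auto simp: divide_le_eq_1 simp del: of_nat_diff)
qed

lemma hyp_factor_bounds:
  assumes l: "1 \<le> l" "l \<le> k" and kM: "k \<le> M" and MN: "M < k * n"
    and rho: "(real (k * n) - real M) / (real (k * n) - real k) \<le> \<rho>" and "\<rho> \<le> 1"
  shows "0 \<le> hyp_factor n k M s l" "hyp_factor n k M s l \<le> \<rho> ^ (k * s)"
proof -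
  define N where "N = k * n"
  define P1 where "P1 = (\<Prod>i<l. (real M - real i) / (real N - real i))"
  define P2 where "P2 = (\<Prod>i<k * (s + 1) - l. (real N - real M - real i) / (real N - real l - real i))"
  have G: "hyp_factor n k M s l = P1 * P2" unfolding hyp_factor_def P1_def P2_def N_def ..
  have "0 \<le> (real M - real i) / (real N - real i) \<and> (real M - real i) / (real N - real i) \<le> 1"
    if "i < l" for i
  proof -
    have "real i < real M" "real M < real N" using that l kM MN unfolding N_def by linarith+
    thus ?thesis by (simp add: divide_le_eq_1)
  qed
  hence P1: "0 \<le> P1" "P1 \<le> 1" unfolding P1_def by (auto intro!: prod_nonneg prod_le_1)
  have "real k < real N" "real M < real N" using kM MN unfolding N_def by linarith+
  hence "0 \<le> (real N - real M) / (real N - real k)" by simp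
  hence r0: "0 \<le> \<rho>" using rho unfolding N_def by linarith
  have "0 \<le> P2 \<and> P2 \<le> \<rho> ^ (k * s)"
  proof (cases "k * (s + 1) - l \<le> N - M")
    case True
    have factor: "0 \<le> (real N - real M - real i) / (real N - real l - real i) \<and>
        (real N - real M - real i) / (real N - real l - real i) \<le> \<rho>" if "i < k * (s + 1) - l" for i
    proof -
      have iNM: "real i < real N - real M" and lM: "real l \<le> real M"
        using that True MN l kM unfolding N_def by linarith+
      have "(real N - real M - real i) / (real N - real l - real i) \<le> (real N - real M) / (real N - real l)"
        using diff_divide_diff_le_divide[of "real i" "real N - real M" "real N - real l"] iNM lM by simp
      also have "\<dots> \<le> (real N - real M) / (real N - real k)"
        using l kM MN unfolding N_def by (intro divide_left_mono mult_pos_pos) linarith+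
      finally show ?thesis using iNM lM rho unfolding N_def by simp
    qed
    have "P2 \<le> (\<Prod>i<k * (s + 1) - l. \<rho>)" unfolding P2_def using factor by (intro prod_mono) auto
    also have "\<dots> \<le> \<rho> ^ (k * s)" using l r0 \<open>\<rho> \<le> 1\<close> by (simp add: power_decreasing)
    moreover have "0 \<le> P2" unfolding P2_def using factor by (intro prod_nonneg) auto
    ultimately show ?thesis by simp
  next
    case False
    hence "P2 = 0" unfolding P2_def using l kM MN
      by (intro prod_zero) (auto intro!: bexI[of _ "N - M"] simp: N_def)
    thus ?thesis using r0 by simp
  qed
  thus "0 \<le> hyp_factor n k M s l" "hyp_factor n k M s l \<le> \<rho> ^ (k * s)"
    unfolding G using P1 mult_mono[of P1 1 P2 "\<rho> ^ (k * s)"] by simp_all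
qed

definition limit_term :: "nat \<Rightarrow> real \<Rightarrow> nat \<Rightarrow> real" where
  "limit_term k c s = (\<Sum>l=1..k. real (k choose l) * (c ^ l * (1 - c) ^ (k * (s + 1) - l)) * hit_weight k s l)"

lemma eventually_large_prefix:
  fixes M :: "nat \<Rightarrow> nat"
  assumes k: "k \<ge> 1" and c: "0 < c" and M: "\<And>n. n \<ge> 1 \<Longrightarrow> M n \<le> k * n - 1"
    and Mc: "(\<lambda>n. real (M n) / real (k * n)) \<longlonglongrightarrow> c"
  shows "eventually (\<lambda>n. 1 \<le> n \<and> k \<le> M n \<and> M n < k * n \<and>
      (real (k * n) - real (M n)) / (real (k * n) - real k) \<le> 1 - c / 4) sequentially"
proof -
  have "eventually (\<lambda>n. c / 2 < real (M n) / real (k * n)) sequentially"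
    using Mc c by (intro order_tendstoD(1)) auto
  moreover have "eventually (\<lambda>n. 4 * real k / c < real (k * n)) sequentially"
    using filterlim_real_mult_sequentially[OF k] unfolding filterlim_at_top_dense by blast
  moreover have "eventually (\<lambda>n. 1 \<le> n) sequentially" by (rule eventually_ge_at_top)
  ultimately show ?thesis
  proof eventually_elim
    case (elim n)
    define N where "N = real (k * n)"
    define m where "m = real (M n)"
    have N: "N > 0" using elim k unfolding N_def by simp
    have m: "m > c * N / 2" using elim(1) N unfolding m_def N_def by (simp add: field_simps)
    have cN: "c * N > 4 * real k" using elim(2) c unfolding N_def by (simp add: field_simps)
    have "k * n \<ge> 1" using k elim(3) by simp
    hence MN: "M n < k * n" using M[OF elim(3)] by linarith
    have km: "real k \<le> m" using m cN by linarith
    have "(1 - c / 4) * (N - real k) = N - real k - c * N / 4 + c * real k / 4"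
      by (simp add: field_simps)
    hence "N - m \<le> (1 - c / 4) * (N - real k)"
      using m cN c mult_nonneg_nonneg[of c "real k"] by linarith
    moreover have "m < N" using MN unfolding m_def N_def by (simp only: of_nat_less_iff)
    ultimately have "(N - m) / (N - real k) \<le> 1 - c / 4" using km by (simp add: pos_divide_le_eq)
    thus ?case using elim(3) MN km unfolding N_def m_def by simp
  qed
qed

lemma abs_success_term_le:
  assumes large: "k \<le> M" "M < k * n" "(real (k * n) - real M) / (real (k * n) - real k) \<le> \<rho>"
    and \<rho>: "0 \<le> \<rho>" "\<rho> \<le> 1"
  shows "\<bar>\<Sum>l=1..k. real (k choose l) * hyp_factor n k M s l * hit_weight k s l\<bar> \<le> 2 ^ k * \<rho> ^ (k * s)"
proof -
  have "\<bar>real (k choose l) * hyp_factor n k M s l * hit_weight k s l\<bar> \<le> real (k choose l) * \<rho> ^ (k * s)"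
    if l: "l \<in> {1..k}" for l
  proof -
    have hyp: "0 \<le> hyp_factor n k M s l" "hyp_factor n k M s l \<le> \<rho> ^ (k * s)"
      using hyp_factor_bounds[OF _ _ large \<rho>(2), of l s] l by auto
    have hit: "0 \<le> hit_weight k s l" "hit_weight k s l \<le> 1" using hit_weight_bounds[of l k s] l by auto
    have "hyp_factor n k M s l * hit_weight k s l \<le> \<rho> ^ (k * s) * 1"
      using hyp hit by (intro mult_mono) auto
    thus ?thesis using hyp hit by (simp add: abs_mult mult.assoc mult_left_mono)
  qed
  hence "\<bar>\<Sum>l=1..k. real (k choose l) * hyp_factor n k M s l * hit_weight k s l\<bar>
      \<le> (\<Sum>l=1..k. real (k choose l) * \<rho> ^ (k * s))"
    by (intro order.trans[OF sum_abs] sum_mono)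
  also have "\<dots> \<le> (\<Sum>l\<le>k. real (k choose l)) * \<rho> ^ (k * s)"
    unfolding sum_distrib_right[symmetric] using \<rho> by (intro mult_right_mono sum_mono2) auto
  also have "\<dots> = 2 ^ k * \<rho> ^ (k * s)" using choose_row_sum[of k] by (simp flip: of_nat_sum)
  finally show ?thesis .
qed

lemma success_prob_tendsto_suminf:
  fixes M :: "nat \<Rightarrow> nat"
  assumes k: "k \<ge> 1" and c: "0 < c" "c < 1"
    and M: "\<And>n. n \<ge> 1 \<Longrightarrow> 1 \<le> M n \<and> M n \<le> k * n - 1"
    and Mc: "(\<lambda>n. real (M n) / real (k * n)) \<longlonglongrightarrow> c"
  shows "(\<lambda>n. success_prob n k (M n)) \<longlonglongrightarrow> suminf (limit_term k c)"
proof -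
  define \<rho> :: real where "\<rho> = 1 - c / 4"
  have \<rho>: "0 \<le> \<rho>" "\<rho> \<le> 1" using c unfolding \<rho>_def by auto
  define a where "a s n = (if s < n then
      (\<Sum>l=1..k. real (k choose l) * hyp_factor n k (M n) s l * hit_weight k s l) else 0)" for s n
  have "(\<lambda>n. a s n) \<longlonglongrightarrow> limit_term k c s" for s
  proof -
    have "(\<lambda>n. \<Sum>l=1..k. real (k choose l) * hyp_factor n k (M n) s l * hit_weight k s l)
        \<longlonglongrightarrow> limit_term k c s"
      unfolding limit_term_def by (intro tendsto_sum tendsto_mult tendsto_const hyp_factor_tendsto[OF k Mc])
    moreover have "eventually (\<lambda>n. (\<Sum>l=1..k. real (k choose l) * hyp_factor n k (M n) s l * hit_weight k s l)
        = a s n) sequentially"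
      using eventually_gt_at_top[of s] by eventually_elim (simp add: a_def)
    ultimately show ?thesis by (rule Lim_transform_eventually)
  qed
  moreover have "eventually (\<lambda>(s, n). norm (a s n) \<le> 2 ^ k * \<rho> ^ (k * s)) (at_top \<times>\<^sub>F sequentially)"
  proof -
    have "eventually (\<lambda>p. True \<and> (k \<le> M (snd p) \<and> M (snd p) < k * snd p \<and>
        (real (k * snd p) - real (M (snd p))) / (real (k * snd p) - real k) \<le> \<rho>)) (at_top \<times>\<^sub>F sequentially)"
      using eventually_large_prefix[OF k c(1) _ Mc] M unfolding \<rho>_def
      by (intro eventually_prodI) (auto elim: eventually_mono)
    moreover have "norm (a s n) \<le> 2 ^ k * \<rho> ^ (k * s)"
      if "k \<le> M n" "M n < k * n" "(real (k * n) - real (M n)) / (real (k * n) - real k) \<le> \<rho>" for s n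
      using abs_success_term_le[OF that \<rho>, of s] \<rho> unfolding a_def by (cases "s < n") simp_all
    ultimately show ?thesis by (auto elim: eventually_mono)
  qed
  moreover have "summable (\<lambda>s. 2 ^ k * \<rho> ^ (k * s))"
    using c k by (simp add: power_mult \<rho>_def power_less_one_iff)
  ultimately have "(\<lambda>n. suminf (\<lambda>s. a s n)) \<longlonglongrightarrow> suminf (limit_term k c)"
    using tannerys_theorem[of a "limit_term k c" sequentially] by simp
  moreover have "eventually (\<lambda>n. suminf (\<lambda>s. a s n) = success_prob n k (M n)) sequentially"
    using eventually_ge_at_top[of 1]
  proof eventually_elim
    case (elim n)
    have "suminf (\<lambda>s. a s n) = (\<Sum>s<n. a s n)" by (rule suminf_finite) (auto simp: a_def)
    also have "\<dots> = success_prob n k (M n)"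
    proof -
      have "1 \<le> M n" "M n \<le> k * n" using M[OF elim] by linarith+
      thus ?thesis using success_prob_eq_sum[OF elim] by (simp add: a_def)
    qed
    finally show ?case .
  qed
  ultimately show ?thesis by (rule Lim_transform_eventually)
qed

lemma summable_power_divide_shifted:
  assumes k: "k \<ge> 1" and c: "0 < c" "c < 1" and l: "l \<le> k"
  shows "summable (\<lambda>s. (1 - c) ^ (k * (s + 2)) / (real (k * (s + 2)) - real l))"
proof (rule summable_comparison_test'[where g = "\<lambda>s. ((1 - c) ^ k) ^ s" and N = 0])
  show "summable (\<lambda>s. ((1 - c) ^ k) ^ s)" using c k by (simp add: power_less_one_iff)
  fix s :: nat
  have "k * (s + 2) \<ge> l + 1" using k l by (simp add: algebra_simps)
  hence D: "real (k * (s + 2)) - real l \<ge> 1" by linarith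
  have "norm ((1 - c) ^ (k * (s + 2)) / (real (k * (s + 2)) - real l))
      = (1 - c) ^ (k * (s + 2)) / (real (k * (s + 2)) - real l)"
    using c D by simp
  also have "\<dots> \<le> (1 - c) ^ (k * (s + 2))"
    using c D mult_left_mono[OF D, of "(1 - c) ^ (k * (s + 2))"] by (simp add: pos_divide_le_eq)
  also have "\<dots> \<le> (1 - c) ^ (k * s)" using c by (intro power_decreasing) auto
  finally show "norm ((1 - c) ^ (k * (s + 2)) / (real (k * (s + 2)) - real l)) \<le> ((1 - c) ^ k) ^ s"
    by (simp add: power_mult)
qed

lemma limit_term_0:
  assumes k: "k \<ge> 1" and c: "c < 1"
  shows "limit_term k c 0 = (1 - c) ^ k * (\<Sum>l=1..k-1. real (k choose l) * (c / (1 - c)) ^ l)"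
proof -
  have "{1..k} = insert k {1..k-1}" using k by auto
  hence "limit_term k c 0 = (\<Sum>l=1..k-1. real (k choose l) * (c ^ l * (1 - c) ^ (k - l)) * hit_weight k 0 l)"
    unfolding limit_term_def using k by (simp add: hit_weight_def)
  also have "\<dots> = (\<Sum>l=1..k-1. (1 - c) ^ k * (real (k choose l) * (c / (1 - c)) ^ l))"
  proof (intro sum.cong refl)
    fix l assume l: "l \<in> {1..k-1}"
    hence "k = (k - l) + l" by arith
    hence "(1 - c) ^ k = (1 - c) ^ (k - l) * (1 - c) ^ l" by (metis power_add)
    moreover have "hit_weight k 0 l = 1" using l by (auto simp: hit_weight_def)
    ultimately show "real (k choose l) * (c ^ l * (1 - c) ^ (k - l)) * hit_weight k 0 l
        = (1 - c) ^ k * (real (k choose l) * (c / (1 - c)) ^ l)"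
      using c by (simp add: field_simps)
  qed
  finally show ?thesis by (simp add: sum_distrib_left)
qed

lemma limit_term_Suc:
  assumes "0 < c" "c < 1"
  shows "limit_term k c (Suc s) = (\<Sum>l=1..k. real k * real (k choose l) * (c / (1 - c)) ^ l *
      ((1 - c) ^ (k * (s + 2)) / (real (k * (s + 2)) - real l)))"
  unfolding limit_term_def
proof (intro sum.cong refl)
  fix l assume l: "l \<in> {1..k}"
  hence lk: "l \<le> k * (s + 2)" by (simp add: trans_le_add1)
  hence "(1 - c) ^ (k * (s + 2)) = (1 - c) ^ (k * (Suc s + 1) - l) * (1 - c) ^ l"
    by (simp flip: power_add)
  moreover have "real (k * (s + 2)) - real l = real (k * (Suc s + 1) - l)" using lk by simp
  ultimately show "real (k choose l) * (c ^ l * (1 - c) ^ (k * (Suc s + 1) - l)) * hit_weight k (Suc s) l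
      = real k * real (k choose l) * (c / (1 - c)) ^ l *
        ((1 - c) ^ (k * (s + 2)) / (real (k * (s + 2)) - real l))"
    using assms by (simp add: hit_weight_def field_simps)
qed

lemma
  assumes k: "k \<ge> 1" and c: "0 < c" "c < 1"
  shows summable_limit_term: "summable (limit_term k c)"
    and suminf_limit_term_Suc: "(\<Sum>s. limit_term k c (Suc s))
      = real k * (\<Sum>l=1..k. real (k choose l) * (c / (1 - c)) ^ l *
          (\<Sum>s. (1 - c) ^ (k * (s + 2)) / (real (k * (s + 2)) - real l)))"
proof -
  define h where "h l s = (1 - c) ^ (k * (s + 2)) / (real (k * (s + 2)) - real l)" for l s
  have h: "summable (h l)" if "l \<in> {1..k}" for l
    unfolding h_def using summable_power_divide_shifted[OF k c, of l] that by simp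
  have shift: "(\<lambda>s. limit_term k c (Suc s))
      = (\<lambda>s. \<Sum>l=1..k. real k * real (k choose l) * (c / (1 - c)) ^ l * h l s)"
    unfolding h_def by (rule ext, rule limit_term_Suc[OF c])
  have sums: "(\<lambda>s. \<Sum>l=1..k. real k * real (k choose l) * (c / (1 - c)) ^ l * h l s)
      sums (\<Sum>l=1..k. \<Sum>s. real k * real (k choose l) * (c / (1 - c)) ^ l * h l s)"
  proof (rule sums_sum)
    fix l assume "l \<in> {1..k}"
    thus "(\<lambda>s. real k * real (k choose l) * (c / (1 - c)) ^ l * h l s)
        sums (\<Sum>s. real k * real (k choose l) * (c / (1 - c)) ^ l * h l s)"
      by (intro summable_sums summable_mult h)
  qed
  hence "summable (\<lambda>s. limit_term k c (Suc s))" unfolding shift by (rule sums_summable)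
  thus "summable (limit_term k c)" by (simp only: summable_Suc_iff)
  have "(\<Sum>s. limit_term k c (Suc s))
      = (\<Sum>l=1..k. \<Sum>s. real k * real (k choose l) * (c / (1 - c)) ^ l * h l s)"
    unfolding shift using sums by (rule sums_unique[symmetric])
  also have "\<dots> = real k * (\<Sum>l=1..k. real (k choose l) * (c / (1 - c)) ^ l * suminf (h l))"
    unfolding sum_distrib_left
  proof (rule sum.cong[OF refl])
    fix l assume "l \<in> {1..k}"
    thus "(\<Sum>s. real k * real (k choose l) * (c / (1 - c)) ^ l * h l s)
        = real k * (real (k choose l) * (c / (1 - c)) ^ l * suminf (h l))"
      using suminf_mult[OF h, of l "real k * real (k choose l) * (c / (1 - c)) ^ l"]
      by (simp only: mult.assoc)
  qed
  finally show "(\<Sum>s. limit_term k c (Suc s))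
      = real k * (\<Sum>l=1..k. real (k choose l) * (c / (1 - c)) ^ l *
          (\<Sum>s. (1 - c) ^ (k * (s + 2)) / (real (k * (s + 2)) - real l)))"
    unfolding h_def .
qed

theorem mainTheorem4:
  fixes k :: nat and c :: real and M :: "nat \<Rightarrow> nat"
  assumes "k \<ge> 2" and "0 < c" and "c < 1"
    and "\<And>n. n \<ge> 1 \<Longrightarrow> 1 \<le> M n \<and> M n \<le> k * n - 1"
    and "(\<lambda>n. real (M n) / real (k * n)) \<longlonglongrightarrow> c"
  shows "(\<lambda>n. success_prob n k (M n)) \<longlonglongrightarrow>
     real k * (\<Sum>l=1..k. real (k choose l) * (c / (1 - c)) ^ l *
        (\<Sum>s. (1 - c) ^ (k * (s + 2)) / (real (k * (s + 2)) - real l)))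
     + (1 - c) ^ k * (\<Sum>l=1..k-1. real (k choose l) * (c / (1 - c)) ^ l)"
proof -
  have k: "k \<ge> 1" using assms(1) by simp
  have "suminf (limit_term k c) = limit_term k c 0 + (\<Sum>s. limit_term k c (Suc s))"
    using summable_limit_term[OF k assms(2,3)] by (simp add: suminf_split_head)
  thus ?thesis
    using success_prob_tendsto_suminf[OF k assms(2-5)] limit_term_0[OF k assms(3)]
      suminf_limit_term_Suc[OF k assms(2,3)]
    by (simp add: add.commute)
qed

end
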